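(* Let $X=\{x_j:j\in J\}\subset\mathbb{R}^2$ be finite with quadratic min-power centre $s^*$, centroid $M$ and $1$-centre $C$. Let $J^*\subseteq J$ be the support of a KKT multiplier vector for $s^*$ with the minimum possible number of nonzero entries, chosen so that $\{x_j:j\in J^*\}$ is the vertex set of a face of a farthest point Delaunay triangulation of $X$, and let $\mathcal{M}^*=\{M_j:j\in J^*\}$. If $M\in\mathrm{conv}(\mathcal{M}^* )$ then $s^*=C$.
   Context: $n=|J|$; $P(s)=\sum_{i\in J}\|s-x_i\|^2+\max_{i\in J}\|s-x_i\|^2$ and $s^*$ is its unique minimiser; $M=\frac1n\sum_i x_i$; $M_j=\frac{1}{n+1}\big(x_j+\sum_{i\in J}x_i\big)$; $C$ is the centre of the minimum enclosing circle of $X$. A KKT multiplier vector for $s^*$ is $(\lambda_j)_{j\in J}$ with $\lambda_j\geq0$, $\sum_j\lambda_j=1$, $s^*=\sum_j\lambda_jM_j$, and $\lambda_j\big(\|s^*-x_j\|-\max_{i}\|s^*-x_i\|\big)=0$ for all $j$. A farthest point Delaunay triangulation of $X$ is a triangulation of the extreme points of $X$ in which the circumcircle of every triangle encloses all of $X$; its faces are its vertices, edges and triangles. *)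

theory Defs
  imports "HOL-Analysis.Analysis"
begin

definition qpower :: "'j set \<Rightarrow> ('j \<Rightarrow> real^2) \<Rightarrow> real^2 \<Rightarrow> real" where
  "qpower J x s = (\<Sum>i\<in>J. (norm (s - x i))^2) + Max ((\<lambda>i. (norm (s - x i))^2) ` J)"

definition centroid_pts :: "'j set \<Rightarrow> ('j \<Rightarrow> real^2) \<Rightarrow> real^2" where
  "centroid_pts J x = (1 / real (card J)) *\<^sub>R (\<Sum>i\<in>J. x i)"

definition Mpt :: "'j set \<Rightarrow> ('j \<Rightarrow> real^2) \<Rightarrow> 'j \<Rightarrow> real^2" where
  "Mpt J x j = (1 / (real (card J) + 1)) *\<^sub>R (x j + (\<Sum>i\<in>J. x i))"

definition is_KKT_multiplier ::
  "'j set \<Rightarrow> ('j \<Rightarrow> real^2) \<Rightarrow> real^2 \<Rightarrow> ('j \<Rightarrow> real) \<Rightarrow> bool" where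
  "is_KKT_multiplier J x s lam \<longleftrightarrow>
     (\<forall>j\<in>J. lam j \<ge> 0) \<and> sum lam J = 1 \<and>
     s = (\<Sum>j\<in>J. lam j *\<^sub>R Mpt J x j) \<and>
     (\<forall>j\<in>J. lam j * (norm (s - x j) - Max ((\<lambda>i. norm (s - x i)) ` J)) = 0)"

definition support_in :: "'j set \<Rightarrow> ('j \<Rightarrow> real) \<Rightarrow> 'j set" where
  "support_in J lam = {j\<in>J. lam j \<noteq> 0}"

definition is_min_enclosing_centre :: "(real^2) set \<Rightarrow> real^2 \<Rightarrow> bool" where
  "is_min_enclosing_centre X C \<longleftrightarrow>
     (\<forall>c. Max ((\<lambda>y. dist C y) ` X) \<le> Max ((\<lambda>y. dist c y) ` X))"

text \<open>A farthest point Delaunay triangulation of X, given as the set K of its faces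
  (vertices, edges, triangles): a simplicial complex of affinely independent cells,
  closed under nonempty subsets, with proper intersections, whose vertex set is the
  set of extreme points of X and whose cells cover conv X, such that the circumcircle
  of every triangle encloses all of X.\<close>
definition fp_delaunay_faces :: "(real^2) set \<Rightarrow> (real^2) set set \<Rightarrow> bool" where
  "fp_delaunay_faces X K \<longleftrightarrow>
     finite K \<and>
     (\<forall>\<sigma>\<in>K. \<sigma> \<noteq> {} \<and> \<not> affine_dependent \<sigma> \<and> (\<forall>\<tau>. \<tau> \<subseteq> \<sigma> \<and> \<tau> \<noteq> {} \<longrightarrow> \<tau> \<in> K)) \<and>
     (\<forall>\<sigma>\<in>K. \<forall>\<tau>\<in>K. convex hull \<sigma> \<inter> convex hull \<tau> = convex hull (\<sigma> \<inter> \<tau>)) \<and>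
     \<Union>K = {v. v extreme_point_of (convex hull X)} \<and>
     (\<Union>\<sigma>\<in>K. convex hull \<sigma>) = convex hull X \<and>
     (\<forall>\<sigma>\<in>K. card \<sigma> = 3 \<longrightarrow>
        (\<exists>c r. (\<forall>v\<in>\<sigma>. dist v c = r) \<and> (\<forall>y\<in>X. dist y c \<le> r)))"

end

theory Submission
  imports Defs
begin

text \<open>Each \<open>M\<^sub>j\<close> is the image of \<open>x\<^sub>j\<close> under the homothety with ratio \<open>1/(n+1)\<close> and
  centre \<open>M\<close>, so \<open>M \<in> conv \<M>\<^sup>*\<close> pulls back to \<open>M \<in> conv {x\<^sub>j : j \<in> J\<^sup>*}\<close>. The KKT
  representation writes \<open>s\<^sup>*\<close> as a convex combination of \<open>\<Sum> \<lambda>\<^sub>j x\<^sub>j\<close> and \<open>M\<close>, so \<open>s\<^sup>*\<close> lies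
  in the convex hull of the support points, which by complementary slackness all lie at the
  maximal distance \<open>R\<close> from \<open>s\<^sup>*\<close>. Any other centre is strictly farther than \<open>R\<close> from one of
  them, since otherwise all of them would lie in an open halfspace not containing \<open>s\<^sup>*\<close>.\<close>

lemma in_convex_hull_equidistant_imp_farther:
  fixes s c :: "'a::real_inner"
  assumes "s \<in> convex hull F" "c \<noteq> s" "\<forall>y\<in>F. norm (s - y) = R"
  shows "\<exists>y\<in>F. norm (c - y) > R"
proof (rule ccontr)
  assume "\<not> ?thesis"
  hence le: "\<forall>y\<in>F. norm (c - y) \<le> R" by auto
  define d where "d = c - s"
  have d_pos: "d \<bullet> d > 0" using assms(2) d_def by simp
  have "F \<subseteq> {y. d \<bullet> s < d \<bullet> y}"
  proof
    fix y assume y: "y \<in> F"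
    have "c - y = d + (s - y)" using d_def by simp
    hence "(norm (c - y))^2 = d \<bullet> d + 2 * (d \<bullet> (s - y)) + (norm (s - y))^2"
      by (simp only: power2_norm_eq_inner inner_add_left inner_add_right inner_commute)
    moreover have "(norm (c - y))^2 \<le> R^2" using le y by (simp add: power_mono)
    moreover have "(norm (s - y))^2 = R^2" using assms(3) y by auto
    ultimately have "d \<bullet> (s - y) < 0" using d_pos by linarith
    thus "y \<in> {y. d \<bullet> s < d \<bullet> y}" by (simp add: inner_diff_right)
  qed
  hence "convex hull F \<subseteq> {y. d \<bullet> s < d \<bullet> y}"
    by (rule hull_minimal) (rule convex_halfspace_gt)
  thus False using assms(1) by auto
qed

lemma min_enclosing_centre_eq_if_in_hull_of_farthest:
  fixes X F :: "(real^2) set" and s C :: "real^2"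
  assumes "finite X" "F \<subseteq> X" "s \<in> convex hull F"
    and farthest: "\<forall>y\<in>F. dist s y = Max ((\<lambda>y. dist s y) ` X)"
    and "is_min_enclosing_centre X C"
  shows "C = s"
proof (rule ccontr)
  assume "C \<noteq> s"
  then obtain y where y: "y \<in> F" "dist C y > Max ((\<lambda>y. dist s y) ` X)"
    using in_convex_hull_equidistant_imp_farther[OF assms(3)] farthest
    by (fastforce simp: dist_norm)
  have "dist C y \<le> Max ((\<lambda>y. dist C y) ` X)"
    using y(1) assms(1,2) by (intro Max_ge) auto
  also have "\<dots> \<le> Max ((\<lambda>y. dist s y) ` X)"
    using assms(5) unfolding is_min_enclosing_centre_def by blast
  finally show False using y(2) by simp
qed

lemma Mpt_eq_affinity:
  "Mpt J x j = (1 / (real (card J) + 1)) *\<^sub>R (\<Sum>i\<in>J. x i) + (1 / (real (card J) + 1)) *\<^sub>R x j"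
  unfolding Mpt_def by (simp add: scaleR_add_right add.commute)

lemma sum_eq_card_scaleR_centroid:
  assumes "finite J" "J \<noteq> {}"
  shows "(\<Sum>i\<in>J. x i) = real (card J) *\<^sub>R centroid_pts J x"
  using assms by (simp add: centroid_pts_def card_gt_0_iff)

lemma centroid_eq_Mpt_affinity:
  assumes "finite J" "J \<noteq> {}"
  shows "centroid_pts J x = (1 / (real (card J) + 1)) *\<^sub>R (\<Sum>i\<in>J. x i)
           + (1 / (real (card J) + 1)) *\<^sub>R centroid_pts J x"
proof -
  have "centroid_pts J x = (1 / (real (card J) + 1)) *\<^sub>R ((real (card J) + 1) *\<^sub>R centroid_pts J x)"
    by (simp add: add_nonneg_eq_0_iff)
  also have "\<dots> = (1 / (real (card J) + 1)) *\<^sub>R ((\<Sum>i\<in>J. x i) + centroid_pts J x)"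
    using sum_eq_card_scaleR_centroid[OF assms] by (simp add: scaleR_left_distrib)
  finally show ?thesis by (simp only: scaleR_add_right)
qed

lemma centroid_in_hull_points_if_in_hull_Mpt:
  assumes "finite J" "J \<noteq> {}"
    and "centroid_pts J x \<in> convex hull (Mpt J x ` S)"
  shows "centroid_pts J x \<in> convex hull (x ` S)"
proof -
  define c where "c = 1 / (real (card J) + 1)"
  define a where "a = c *\<^sub>R (\<Sum>i\<in>J. x i)"
  have "Mpt J x ` S = (\<lambda>y. a + c *\<^sub>R y) ` (x ` S)"
    unfolding a_def c_def Mpt_eq_affinity image_image ..
  then obtain q where q: "q \<in> convex hull (x ` S)" "centroid_pts J x = a + c *\<^sub>R q"
    using assms(3) by (auto simp: convex_hull_affinity)
  moreover have "centroid_pts J x = a + c *\<^sub>R centroid_pts J x"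
    using centroid_eq_Mpt_affinity[OF assms(1,2)] unfolding a_def c_def .
  moreover have "c \<noteq> 0" unfolding c_def by (simp add: add_nonneg_eq_0_iff)
  ultimately show ?thesis by simp
qed

lemma KKT_point_eq:
  assumes "finite J" "J \<noteq> {}" "is_KKT_multiplier J x s lam"
  shows "s = (1 / (real (card J) + 1)) *\<^sub>R (\<Sum>j\<in>J. lam j *\<^sub>R x j)
           + (real (card J) / (real (card J) + 1)) *\<^sub>R centroid_pts J x"
proof -
  define c where "c = 1 / (real (card J) + 1)"
  define a where "a = c *\<^sub>R (\<Sum>i\<in>J. x i)"
  have lam_sum: "sum lam J = 1" and s_eq: "s = (\<Sum>j\<in>J. lam j *\<^sub>R Mpt J x j)"
    using assms(3) unfolding is_KKT_multiplier_def by auto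
  have "s = (\<Sum>j\<in>J. lam j *\<^sub>R a + c *\<^sub>R (lam j *\<^sub>R x j))"
    unfolding s_eq Mpt_eq_affinity a_def c_def by (simp add: scaleR_add_right)
  also have "\<dots> = sum lam J *\<^sub>R a + c *\<^sub>R (\<Sum>j\<in>J. lam j *\<^sub>R x j)"
    by (simp only: sum.distrib scaleR_sum_left scaleR_sum_right)
  finally show ?thesis
    unfolding lam_sum a_def c_def sum_eq_card_scaleR_centroid[OF assms(1,2)]
    by (simp add: add.commute)
qed

lemma KKT_point_in_hull_support:
  assumes "finite J" "J \<noteq> {}" "is_KKT_multiplier J x s lam"
    and "centroid_pts J x \<in> convex hull (x ` support_in J lam)"
  shows "s \<in> convex hull (x ` support_in J lam)"
proof -
  define S where "S = support_in J lam"
  have S_sub: "S \<subseteq> J" and lam_zero: "\<forall>j\<in>J - S. lam j = 0"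
    unfolding S_def support_in_def by auto
  have lam_nonneg: "\<forall>j\<in>J. lam j \<ge> 0" and "sum lam J = 1"
    using assms(3) unfolding is_KKT_multiplier_def by auto
  hence "sum lam S = 1"
    using sum.mono_neutral_right[OF assms(1) S_sub] lam_zero by metis
  hence "(\<Sum>j\<in>S. lam j *\<^sub>R x j) \<in> convex hull (x ` S)"
    using lam_nonneg S_sub finite_subset[OF S_sub assms(1)]
    by (intro convex_sum) (auto intro: hull_inc)
  moreover have "(\<Sum>j\<in>S. lam j *\<^sub>R x j) = (\<Sum>j\<in>J. lam j *\<^sub>R x j)"
    using assms(1) S_sub lam_zero by (intro sum.mono_neutral_left) auto
  ultimately have "(\<Sum>j\<in>J. lam j *\<^sub>R x j) \<in> convex hull (x ` S)" by simp
  thus ?thesis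
    unfolding KKT_point_eq[OF assms(1-3)] S_def
    using assms(4) by (intro convexD) (auto simp: field_simps add_pos_nonneg)
qed

lemma KKT_support_farthest:
  assumes "is_KKT_multiplier J x s lam" "j \<in> support_in J lam"
  shows "norm (s - x j) = Max ((\<lambda>i. norm (s - x i)) ` J)"
  using assms unfolding is_KKT_multiplier_def support_in_def by auto

theorem proposition2:
  fixes J :: "'j set" and x :: "'j \<Rightarrow> real^2"
    and s C :: "real^2" and lam :: "'j \<Rightarrow> real"
  assumes "finite J" and "J \<noteq> {}" and "inj_on x J"
    and s_min: "\<forall>t. qpower J x s \<le> qpower J x t"
    and C_centre: "is_min_enclosing_centre (x ` J) C"
    and lam_KKT: "is_KKT_multiplier J x s lam"
    and lam_min: "\<forall>mu. is_KKT_multiplier J x s mu \<longrightarrow>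
                        card (support_in J lam) \<le> card (support_in J mu)"
    and face: "\<exists>K. fp_delaunay_faces (x ` J) K \<and> x ` (support_in J lam) \<in> K"
    and M_in: "centroid_pts J x \<in> convex hull (Mpt J x ` support_in J lam)"
  shows "s = C"
proof -
  have "s \<in> convex hull (x ` support_in J lam)"
    using KKT_point_in_hull_support[OF assms(1,2) lam_KKT]
      centroid_in_hull_points_if_in_hull_Mpt[OF assms(1,2) M_in] .
  moreover have "\<forall>y\<in>x ` support_in J lam. dist s y = Max ((\<lambda>y. dist s y) ` x ` J)"
    using KKT_support_farthest[OF lam_KKT] by (simp add: image_image dist_norm)
  moreover have "x ` support_in J lam \<subseteq> x ` J"
    unfolding support_in_def by auto
  ultimately have "C = s"
    using min_enclosing_centre_eq_if_in_hull_of_farthest[OF finite_imageI[OF assms(1)] _ _ _ C_centre]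
    by blast
  thus ?thesis by simp
qed

end
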